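(* Let $f:\mathcal{P}^n\to X$ be an onto, tops-only voting rule. Then $f$ is not obviously manipulable (NOM) if and only if every veto is a strong veto, i.e., $SV_i=V_i$ for each agent $i\in N$.
   Context: $N=\{1,\dots,n\}$ with $n\ge 2$ is the set of agents and $X$ is a finite set of alternatives with $|X|=m\ge 2$. $\mathcal{P}$ is the set of all strict preferences (linear orders) over $X$; for $P_i\in\mathcal{P}$, $t(P_i)$ is its top (best) alternative and $R_i$ the associated weak preference ($xR_iy$ iff $x=y$ or $xP_iy$). A rule is a function $f:\mathcal{P}^n\to X$, assumed onto. It is tops-only if $f(P)=f(P')$ whenever $t(P_i)=t(P_i')$ for all $i$. For $P_i\in\mathcal{P}$, the option set is $O^f(P_i)=\{f(P_i,P_{-i}):P_{-i}\in\mathcal{P}^{n-1}\}$. For $Y\subseteq X$ nonempty, $B(P_i,Y)$ and $W(P_i,Y)$ denote the best and worst elements of $Y$ according to $P_i$. A report $P_i'$ is a (profitable) manipulation of $f$ at $P_i$ if there is $P_{-i}$ with $f(P_i',P_{-i})\,P_i\,f(P_i,P_{-i})$. Such a manipulation is obvious if $W(P_i,O^f(P_i'))\,P_i\,W(P_i,O^f(P_i))$ or $B(P_i,O^f(P_i'))\,P_i\,B(P_i,O^f(P_i))$. $f$ is NOM if no agent has an obvious manipulation at any preference. Agent $i$ vetoes $x$ via $P_i$ if $x\notin O^f(P_i)$; $V_i$ is the set of alternatives that $i$ vetoes via some preference; for $x\in V_i$, $\mathcal{V}_i^x=\{P_i\in\mathcal{P}: i \text{ vetoes } x \text{ via } P_i\}$.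 Agent $i$ strongly vetoes $x$ if $\mathcal{V}_i^x=\{P_i\in\mathcal{P}:t(P_i)\neq x\}$; $SV_i$ is the set of alternatives strongly vetoed by $i$. *)

theory Defs
  imports Main "HOL-Library.Cardinality"
begin

text \<open>Agents form a finite type 'i (N), alternatives a finite type 'a (X).
 A strict preference is a strict linear order on X, given as a relation:
 (x,y) \<in> P means x P y (x strictly better than y).\<close>

definition prefs :: "'a rel set" where
  "prefs = {P. strict_linear_order P}"

definition profiles :: "('i \<Rightarrow> 'a rel) set" where
  "profiles = {Pr. \<forall>i. Pr i \<in> prefs}"

definition top :: "'a rel \<Rightarrow> 'a" where
  "top P = (THE x. \<forall>y. y \<noteq> x \<longrightarrow> (x, y) \<in> P)"

definition best :: "'a rel \<Rightarrow> 'a set \<Rightarrow> 'a" where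
  "best P Y = (THE x. x \<in> Y \<and> (\<forall>y\<in>Y. y \<noteq> x \<longrightarrow> (x, y) \<in> P))"

definition worst :: "'a rel \<Rightarrow> 'a set \<Rightarrow> 'a" where
  "worst P Y = (THE x. x \<in> Y \<and> (\<forall>y\<in>Y. y \<noteq> x \<longrightarrow> (y, x) \<in> P))"

definition onto_rule :: "(('i \<Rightarrow> 'a rel) \<Rightarrow> 'a) \<Rightarrow> bool" where
  "onto_rule f \<longleftrightarrow> f ` profiles = UNIV"

definition tops_only :: "(('i \<Rightarrow> 'a rel) \<Rightarrow> 'a) \<Rightarrow> bool" where
  "tops_only f \<longleftrightarrow> (\<forall>P\<in>profiles. \<forall>P'\<in>profiles.
      (\<forall>i. top (P i) = top (P' i)) \<longrightarrow> f P = f P')"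

definition option_set :: "(('i \<Rightarrow> 'a rel) \<Rightarrow> 'a) \<Rightarrow> 'i \<Rightarrow> 'a rel \<Rightarrow> 'a set" where
  "option_set f i Pi = {f (Pr(i := Pi)) | Pr. Pr \<in> profiles}"

definition manipulation :: "(('i \<Rightarrow> 'a rel) \<Rightarrow> 'a) \<Rightarrow> 'i \<Rightarrow> 'a rel \<Rightarrow> 'a rel \<Rightarrow> bool" where
  "manipulation f i Pi Pi' \<longleftrightarrow>
     (\<exists>Pr\<in>profiles. (f (Pr(i := Pi')), f (Pr(i := Pi))) \<in> Pi)"

definition obvious_manipulation :: "(('i \<Rightarrow> 'a rel) \<Rightarrow> 'a) \<Rightarrow> 'i \<Rightarrow> 'a rel \<Rightarrow> 'a rel \<Rightarrow> bool" where
  "obvious_manipulation f i Pi Pi' \<longleftrightarrow> manipulation f i Pi Pi' \<and>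
     ((worst Pi (option_set f i Pi'), worst Pi (option_set f i Pi)) \<in> Pi \<or>
      (best Pi (option_set f i Pi'), best Pi (option_set f i Pi)) \<in> Pi)"

definition NOM :: "(('i \<Rightarrow> 'a rel) \<Rightarrow> 'a) \<Rightarrow> bool" where
  "NOM f \<longleftrightarrow> (\<forall>i. \<forall>Pi\<in>prefs. \<forall>Pi'\<in>prefs. \<not> obvious_manipulation f i Pi Pi')"

definition veto_set :: "(('i \<Rightarrow> 'a rel) \<Rightarrow> 'a) \<Rightarrow> 'i \<Rightarrow> 'a set" where
  "veto_set f i = {x. \<exists>Pi\<in>prefs. x \<notin> option_set f i Pi}"

definition veto_prefs :: "(('i \<Rightarrow> 'a rel) \<Rightarrow> 'a) \<Rightarrow> 'i \<Rightarrow> 'a \<Rightarrow> 'a rel set" where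
  "veto_prefs f i x = {Pi\<in>prefs. x \<notin> option_set f i Pi}"

definition strong_veto_set :: "(('i \<Rightarrow> 'a rel) \<Rightarrow> 'a) \<Rightarrow> 'i \<Rightarrow> 'a set" where
  "strong_veto_set f i = {x \<in> veto_set f i. veto_prefs f i x = {Pi\<in>prefs. top Pi \<noteq> x}}"

end

theory Submission
  imports Defs
begin

(* Let a be the top of agent i's true preference. Under NOM, a is always an option of i:
   otherwise, by onto-ness, i could report the preference it has in a profile electing a,
   which makes a the best option. If i vetoes x via some preference, then x is no option at any
   preference Q whose top is not x: by tops-onlyness x may be put at the bottom of Q, and then
   reporting the vetoing preference raises the worst option. So NOM makes every veto strong.
   Conversely, if every veto is strong, a is always an option, so the best option cannot be
   improved; and a report that raised the worst option w would veto w, forcing w = a, which is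
   impossible since nothing is better than a. *)

lemma pref_irrefl: "P \<in> prefs \<Longrightarrow> (x, x) \<notin> P"
  and pref_asym: "P \<in> prefs \<Longrightarrow> (x, y) \<in> P \<Longrightarrow> (y, x) \<notin> P"
  and pref_total: "P \<in> prefs \<Longrightarrow> x \<noteq> y \<Longrightarrow> (x, y) \<in> P \<or> (y, x) \<in> P"
  unfolding prefs_def strict_linear_order_on_def irrefl_def total_on_def trans_def
  by blast+

lemma converse_in_prefs: "P \<in> prefs \<Longrightarrow> P\<inverse> \<in> prefs"
  unfolding prefs_def strict_linear_order_on_def irrefl_def total_on_def trans_def
  by blast

lemma prefs_acyclic: "P \<in> prefs \<Longrightarrow> acyclic P"
  by (simp add: prefs_def strict_linear_order_on_def acyclic_irrefl)

lemma prefs_ex1_best: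
  assumes P: "P \<in> prefs" and "finite Y" "Y \<noteq> {}"
  shows "\<exists>!x. x \<in> Y \<and> (\<forall>y\<in>Y. y \<noteq> x \<longrightarrow> (x, y) \<in> P)"
proof -
  have "acyclic (P \<inter> Y \<times> Y)"
    using prefs_acyclic[OF P] by (rule acyclic_subset) blast
  moreover have "finite (P \<inter> Y \<times> Y)"
    using \<open>finite Y\<close> by (simp add: finite_Int)
  ultimately have wf: "wf (P \<inter> Y \<times> Y)"
    by (rule finite_acyclic_wf[rotated])
  obtain x where "x \<in> Y" and "\<And>y. (y, x) \<in> P \<inter> Y \<times> Y \<Longrightarrow> y \<notin> Y"
    by (rule wfE_min'[OF wf \<open>Y \<noteq> {}\<close>]) (rule that)
  then have x: "x \<in> Y \<and> (\<forall>y\<in>Y. y \<noteq> x \<longrightarrow> (x, y) \<in> P)"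
    using pref_total[OF P] by blast
  then show ?thesis
    by (rule ex1I) (use x pref_asym[OF P] in metis)
qed

lemma best_eq_iff:
  fixes P :: "'a::finite rel"
  assumes "P \<in> prefs" "Y \<noteq> {}"
  shows "best P Y = x \<longleftrightarrow> x \<in> Y \<and> (\<forall>y\<in>Y. y \<noteq> x \<longrightarrow> (x, y) \<in> P)"
proof -
  note ex1 = prefs_ex1_best[OF assms(1) finite assms(2)]
  show ?thesis
  proof
    assume "best P Y = x"
    then show "x \<in> Y \<and> (\<forall>y\<in>Y. y \<noteq> x \<longrightarrow> (x, y) \<in> P)"
      using theI'[OF ex1] unfolding best_def by simp
  next
    assume "x \<in> Y \<and> (\<forall>y\<in>Y. y \<noteq> x \<longrightarrow> (x, y) \<in> P)"
    then show "best P Y = x"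
      unfolding best_def by (rule the1_equality[OF ex1])
  qed
qed

lemma best_in: "P \<in> prefs \<Longrightarrow> Y \<noteq> {} \<Longrightarrow> best P Y \<in> (Y :: 'a::finite set)"
  using best_eq_iff[of P Y "best P Y"] by simp

lemma worst_eq_best_converse: "worst P Y = best (P\<inverse>) Y"
  unfolding worst_def best_def by simp

lemma worst_eq_iff:
  fixes P :: "'a::finite rel"
  assumes "P \<in> prefs" "Y \<noteq> {}"
  shows "worst P Y = x \<longleftrightarrow> x \<in> Y \<and> (\<forall>y\<in>Y. y \<noteq> x \<longrightarrow> (y, x) \<in> P)"
  using best_eq_iff[OF converse_in_prefs[OF assms(1)] assms(2)]
  by (simp add: worst_eq_best_converse)

lemma worst_in: "P \<in> prefs \<Longrightarrow> Y \<noteq> {} \<Longrightarrow> worst P Y \<in> (Y :: 'a::finite set)"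
  using worst_eq_iff[of P Y "worst P Y"] by simp

lemma not_in_if_worse_than_worst:
  fixes P :: "'a::finite rel"
  assumes P: "P \<in> prefs" and "Y \<noteq> {}" and worse: "(worst P Y, x) \<in> P"
  shows "x \<notin> Y"
proof
  assume "x \<in> Y"
  moreover have "x \<noteq> worst P Y"
    using worse pref_irrefl[OF P] by metis
  ultimately have "(x, worst P Y) \<in> P"
    using worst_eq_iff[OF P \<open>Y \<noteq> {}\<close>, of "worst P Y"] by simp
  then show False
    using worse pref_asym[OF P] by metis
qed

lemma top_eq_best_UNIV: "top P = best P UNIV"
  unfolding top_def best_def by simp

lemma top_eq_iff:
  fixes P :: "'a::finite rel"
  assumes "P \<in> prefs"
  shows "top P = x \<longleftrightarrow> (\<forall>y. y \<noteq> x \<longrightarrow> (x, y) \<in> P)"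
  using best_eq_iff[OF assms, of UNIV] by (simp add: top_eq_best_UNIV)

lemma top_greatest: "P \<in> prefs \<Longrightarrow> y \<noteq> top P \<Longrightarrow> (top P, y) \<in> (P :: 'a::finite rel)"
  using top_eq_iff[of P "top P"] by simp

lemma not_above_top: "P \<in> prefs \<Longrightarrow> (y, top P) \<notin> (P :: 'a::finite rel)"
  by (cases "y = top P") (simp_all add: pref_irrefl pref_asym top_greatest)

lemma best_eq_top: "P \<in> prefs \<Longrightarrow> top P \<in> Y \<Longrightarrow> best P Y = top (P :: 'a::finite rel)"
  by (subst best_eq_iff) (auto simp: top_greatest)

lemma rank_order_in_prefs:
  fixes k :: "'a \<Rightarrow> 'b::linorder"
  assumes "inj k"
  shows "{(u, v). k u < k v} \<in> prefs"
proof -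
  have "k u < k v \<or> k v < k u" if "u \<noteq> v" for u v
    using that inj_eq[OF assms, of u v] by (simp add: neq_iff)
  then show ?thesis
    unfolding prefs_def strict_linear_order_on_def irrefl_def total_on_def trans_def by auto
qed

lemma ex_pref_top_bottom:
  fixes a z :: "'a::finite"
  assumes "a \<noteq> z"
  shows "\<exists>P\<in>prefs. top P = a \<and> (\<forall>y. y \<noteq> z \<longrightarrow> (y, z) \<in> P)"
proof -
  obtain h :: "'a \<Rightarrow> nat" and n where "h ` UNIV = {..<n}" and "inj h"
    using finite_imp_inj_to_nat_seg[of "UNIV :: 'a set"] by auto
  then have h_less: "h u < n" for u
    by blast
  define k where "k u = (if u = a then 0 else if u = z then Suc n else Suc (h u))" for u
  have "inj k"
    using assms h_less unfolding inj_def k_def by (auto simp: inj_eq[OF \<open>inj h\<close>])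
  define P where "P = {(u, v). k u < k v}"
  have P: "P \<in> prefs"
    unfolding P_def using \<open>inj k\<close> by (rule rank_order_in_prefs)
  moreover have "top P = a"
    using P by (simp add: top_eq_iff P_def k_def)
  moreover have "(y, z) \<in> P" if "y \<noteq> z" for y
    using that assms h_less[of y] by (simp add: P_def k_def)
  ultimately show ?thesis
    by blast
qed

lemma profile_upd_in_profiles: "Pr \<in> profiles \<Longrightarrow> Pi \<in> prefs \<Longrightarrow> Pr(i := Pi) \<in> profiles"
  unfolding profiles_def by auto

lemma option_set_memI: "Pr \<in> profiles \<Longrightarrow> f (Pr(i := Pi)) \<in> option_set f i Pi"
  unfolding option_set_def by blast

lemma option_set_nonempty: "Pi \<in> prefs \<Longrightarrow> option_set f i Pi \<noteq> {}"
  using option_set_memI[of "\<lambda>_. Pi" f i Pi] unfolding profiles_def by auto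

lemma tops_only_update_eq:
  assumes "tops_only f" "Pr \<in> profiles" "Pi \<in> prefs" "Qi \<in> prefs" "top Pi = top Qi"
  shows "f (Pr(i := Pi)) = f (Pr(i := Qi))"
proof -
  have "Pr(i := Pi) \<in> profiles" "Pr(i := Qi) \<in> profiles"
    using assms(2-4) by (simp_all add: profile_upd_in_profiles)
  moreover have "\<forall>j. top ((Pr(i := Pi)) j) = top ((Pr(i := Qi)) j)"
    using assms(5) by simp
  ultimately show ?thesis
    using assms(1) unfolding tops_only_def by blast
qed

lemma option_set_tops_only:
  assumes "tops_only f" "Pi \<in> prefs" "Qi \<in> prefs" "top Pi = top Qi"
  shows "option_set f i Pi = option_set f i Qi"
  using tops_only_update_eq[OF assms(1) _ assms(2-4)] unfolding option_set_def by metis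

lemma NOM_top_in_option_set:
  fixes f :: "('i \<Rightarrow> 'a::finite rel) \<Rightarrow> 'a"
  assumes nom: "NOM f" and "onto_rule f" and Q: "Q \<in> prefs"
  shows "top Q \<in> option_set f i Q"
proof (rule ccontr)
  assume top_out: "top Q \<notin> option_set f i Q"
  obtain Pr where Pr: "Pr \<in> profiles" "f Pr = top Q"
    using \<open>onto_rule f\<close> unfolding onto_rule_def by (metis UNIV_I imageE)
  have own: "Pr i \<in> prefs"
    using Pr(1) unfolding profiles_def by blast
  have "f (Pr(i := Pr i)) = top Q"
    using Pr(2) by simp
  moreover have "f (Pr(i := Q)) \<noteq> top Q"
    using top_out option_set_memI[OF Pr(1)] by metis
  ultimately have "manipulation f i Q (Pr i)"
    unfolding manipulation_def using Pr(1) top_greatest[OF Q] by metis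
  moreover have "best Q (option_set f i (Pr i)) = top Q"
    using best_eq_top[OF Q] option_set_memI[OF Pr(1), of f i "Pr i"] Pr(2) by simp
  moreover have "best Q (option_set f i Q) \<noteq> top Q"
    using best_in[OF Q option_set_nonempty[OF Q]] top_out by metis
  ultimately have "obvious_manipulation f i Q (Pr i)"
    unfolding obvious_manipulation_def using top_greatest[OF Q] by metis
  then show False
    using nom Q own unfolding NOM_def by blast
qed

lemma NOM_vetoed_at_non_top:
  fixes f :: "('i \<Rightarrow> 'a::finite rel) \<Rightarrow> 'a"
  assumes nom: "NOM f" and "tops_only f"
    and Pa: "Pa \<in> prefs" "x \<notin> option_set f i Pa"
    and Q: "Q \<in> prefs" "top Q \<noteq> x"
  shows "x \<notin> option_set f i Q"
proof
  assume x_in: "x \<in> option_set f i Q"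
  then obtain Pr where Pr: "Pr \<in> profiles" "f (Pr(i := Q)) = x"
    unfolding option_set_def by blast
  obtain Pc where Pc: "Pc \<in> prefs" "top Pc = top Q" "\<forall>y. y \<noteq> x \<longrightarrow> (y, x) \<in> Pc"
    using ex_pref_top_bottom[OF Q(2)] by blast
  have "f (Pr(i := Pc)) = x"
    using tops_only_update_eq[OF \<open>tops_only f\<close> Pr(1) Pc(1) Q(1) Pc(2)] Pr(2) by simp
  moreover have "f (Pr(i := Pa)) \<noteq> x"
    using Pa(2) option_set_memI[OF Pr(1)] by metis
  ultimately have "manipulation f i Pc Pa"
    unfolding manipulation_def using Pr(1) Pc(3) by metis
  moreover have "worst Pc (option_set f i Pc) = x"
  proof -
    have "x \<in> option_set f i Pc"
      using option_set_tops_only[OF \<open>tops_only f\<close> Pc(1) Q(1) Pc(2)] x_in by simp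
    then show ?thesis
      using Pc(3) by (simp add: worst_eq_iff[OF Pc(1) option_set_nonempty[OF Pc(1)]])
  qed
  moreover have "worst Pc (option_set f i Pa) \<noteq> x"
    using worst_in[OF Pc(1) option_set_nonempty[OF Pa(1)]] Pa(2) by metis
  ultimately have "obvious_manipulation f i Pc Pa"
    unfolding obvious_manipulation_def using Pc(3) by metis
  then show False
    using nom Pc(1) Pa(1) unfolding NOM_def by blast
qed

lemma NOM_imp_strong_veto_set_eq:
  fixes f :: "('i \<Rightarrow> 'a::finite rel) \<Rightarrow> 'a"
  assumes "NOM f" "onto_rule f" "tops_only f"
  shows "strong_veto_set f i = veto_set f i"
proof -
  have "veto_prefs f i x = {Q \<in> prefs. top Q \<noteq> x}" if vetoed: "x \<in> veto_set f i" for x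
  proof -
    obtain Pa where "Pa \<in> prefs" "x \<notin> option_set f i Pa"
      using vetoed unfolding veto_set_def by blast
    then show ?thesis
      unfolding veto_prefs_def
      using NOM_top_in_option_set[OF assms(1,2)] NOM_vetoed_at_non_top[OF assms(1,3)] by blast
  qed
  then show ?thesis
    unfolding strong_veto_set_def by blast
qed

lemma strong_veto_set_eq_top_in_option_set:
  fixes f :: "('i \<Rightarrow> 'a rel) \<Rightarrow> 'a"
  assumes "strong_veto_set f i = veto_set f i" "Pi \<in> prefs"
  shows "top Pi \<in> option_set f i Pi"
  using assms unfolding strong_veto_set_def veto_set_def veto_prefs_def by blast

lemma strong_veto_set_eq_worst_not_improvable:
  fixes f :: "('i \<Rightarrow> 'a::finite rel) \<Rightarrow> 'a"
  assumes strong: "strong_veto_set f i = veto_set f i" and Pi: "Pi \<in> prefs" and "Pi' \<in> prefs"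
  shows "(worst Pi (option_set f i Pi'), worst Pi (option_set f i Pi)) \<notin> Pi"
proof
  define w where "w = worst Pi (option_set f i Pi)"
  assume "(worst Pi (option_set f i Pi'), w) \<in> Pi"
  then have "w \<notin> option_set f i Pi'"
    by (rule not_in_if_worse_than_worst[OF Pi option_set_nonempty[OF \<open>Pi' \<in> prefs\<close>]])
  then have "w \<in> strong_veto_set f i"
    unfolding strong veto_set_def using \<open>Pi' \<in> prefs\<close> by blast
  moreover have "w \<in> option_set f i Pi"
    unfolding w_def using worst_in[OF Pi option_set_nonempty[OF Pi]] .
  ultimately have "top Pi = w"
    using Pi unfolding strong_veto_set_def veto_prefs_def by blast
  with \<open>(worst Pi (option_set f i Pi'), w) \<in> Pi\<close> show False
    using not_above_top[OF Pi] by metis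
qed

lemma strong_veto_set_eq_imp_NOM:
  fixes f :: "('i \<Rightarrow> 'a::finite rel) \<Rightarrow> 'a"
  assumes strong: "\<forall>i. strong_veto_set f i = veto_set f i"
  shows "NOM f"
  unfolding NOM_def obvious_manipulation_def
proof (intro allI ballI notI)
  fix i Pi Pi'
  assume Pi: "Pi \<in> prefs" and "Pi' \<in> prefs"
    and obvious: "manipulation f i Pi Pi' \<and>
      ((worst Pi (option_set f i Pi'), worst Pi (option_set f i Pi)) \<in> Pi \<or>
       (best Pi (option_set f i Pi'), best Pi (option_set f i Pi)) \<in> Pi)"
  have "best Pi (option_set f i Pi) = top Pi"
    using best_eq_top[OF Pi strong_veto_set_eq_top_in_option_set[OF strong[rule_format] Pi]] .
  then have "(best Pi (option_set f i Pi'), best Pi (option_set f i Pi)) \<notin> Pi"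
    using not_above_top[OF Pi] by simp
  moreover have "(worst Pi (option_set f i Pi'), worst Pi (option_set f i Pi)) \<notin> Pi"
    using strong_veto_set_eq_worst_not_improvable[OF strong[rule_format] Pi \<open>Pi' \<in> prefs\<close>] .
  ultimately show False
    using obvious by blast
qed

theorem theorem1:
  fixes f :: "('i::finite \<Rightarrow> 'a::finite rel) \<Rightarrow> 'a"
  assumes "CARD('i) \<ge> 2" and "CARD('a) \<ge> 2"
    and "onto_rule f" and "tops_only f"
  shows "NOM f \<longleftrightarrow> (\<forall>i. strong_veto_set f i = veto_set f i)"
proof
  assume "NOM f"
  with assms(3,4) show "\<forall>i. strong_veto_set f i = veto_set f i"
    by (simp add: NOM_imp_strong_veto_set_eq)
next
  assume "\<forall>i. strong_veto_set f i = veto_set f i"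
  then show "NOM f"
    by (rule strong_veto_set_eq_imp_NOM)
qed

end
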